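(* Let $(G,\mathcal{P}_G)$ be a pinned graph and let $(H,\mathcal{P}_H)$ be a pinned subgraph of it. If $(G,\mathcal{P}_G)$ is $k$-admissible, then $(H,\mathcal{P}_H)$ is $k$-admissible.
   Context: A pinned graph $(G,\mathcal{P})$ is a finite simple graph $G=(\mathcal{V},\mathcal{E})$ together with a set $\mathcal{P}\subset\mathcal{V}$ of pinned vertices, no two of which are adjacent; $m=|\mathcal{P}|$. $(H,\mathcal{P}_H)$ is a pinned subgraph of $(G,\mathcal{P}_G)$ if $H$ is an induced subgraph of $G$ and $\mathcal{P}_H\subset\mathcal{P}_G$ (with $\mathcal{P}_H$ a set of vertices of $H$). A construction order is an ordering $v_1,\dots,v_l$ of $\mathcal{V}$ whose first $m$ entries are exactly the pinned vertices; for $i>m$ the back-degree of $v_i$ is the number of vertices among $v_1,\dots,v_{i-1}$ adjacent to $v_i$. $(G,\mathcal{P})$ is $k$-admissible ($k\ge0$ integer) if some construction order has all back-degrees (for $i>m$) at most $k$. *)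

theory Defs
  imports Main
begin

definition simple_graph :: "'a set \<Rightarrow> 'a set set \<Rightarrow> bool" where
  "simple_graph V E \<longleftrightarrow> finite V \<and> (\<forall>e\<in>E. card e = 2 \<and> e \<subseteq> V)"

definition pinned_graph :: "'a set \<Rightarrow> 'a set set \<Rightarrow> 'a set \<Rightarrow> bool" where
  "pinned_graph V E P \<longleftrightarrow> simple_graph V E \<and> P \<subseteq> V \<and>
     (\<forall>u\<in>P. \<forall>v\<in>P. {u, v} \<notin> E)"

definition pinned_subgraph ::
  "'a set \<Rightarrow> 'a set set \<Rightarrow> 'a set \<Rightarrow> 'a set \<Rightarrow> 'a set set \<Rightarrow> 'a set \<Rightarrow> bool" where
  "pinned_subgraph VH EH PH VG EG PG \<longleftrightarrow>
     VH \<subseteq> VG \<and> EH = {e\<in>EG. e \<subseteq> VH} \<and> PH \<subseteq> PG \<and> PH \<subseteq> VH"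

definition construction_order :: "'a set \<Rightarrow> 'a set \<Rightarrow> 'a list \<Rightarrow> bool" where
  "construction_order V P vs \<longleftrightarrow>
     distinct vs \<and> set vs = V \<and> set (take (card P) vs) = P"

definition back_degree :: "'a set set \<Rightarrow> 'a list \<Rightarrow> nat \<Rightarrow> nat" where
  "back_degree E vs i = card {j. j < i \<and> {vs ! j, vs ! i} \<in> E}"

definition k_admissible :: "nat \<Rightarrow> 'a set \<Rightarrow> 'a set set \<Rightarrow> 'a set \<Rightarrow> bool" where
  "k_admissible k V E P \<longleftrightarrow>
     (\<exists>vs. construction_order V P vs \<and>
        (\<forall>i. card P \<le> i \<and> i < length vs \<longrightarrow> back_degree E vs i \<le> k))"

end

theory Submission
  imports Defs
begin

text \<open>Take a good construction order of G, list the pinned vertices of H first and then the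
remaining vertices of H in the order inherited from G. A vertex w of H that is pinned in G
but not in H occurs among the first |P_G| entries of the G-order, so all its earlier
neighbours in the new order are pinned in G, hence not adjacent to w: its back-degree is 0.
A vertex w that is not pinned in G comes after all of P_G in the G-order, so its earlier
vertices in the new order were already earlier in the G-order, and since H is induced its
back-degree can only drop.\<close>

definition preceding :: "'a list \<Rightarrow> 'a \<Rightarrow> 'a set" where
  "preceding xs w = set (takeWhile (\<lambda>x. x \<noteq> w) xs)"

definition back_neighbours :: "'a set set \<Rightarrow> 'a list \<Rightarrow> 'a \<Rightarrow> 'a set" where
  "back_neighbours E xs w = {u \<in> preceding xs w. {u, w} \<in> E}"

lemma takeWhile_neq_nth:
  assumes "distinct xs" "i < length xs"
  shows "takeWhile (\<lambda>x. x \<noteq> xs ! i) xs = take i xs"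
  using assms by (intro takeWhile_eq_take_P_nth) (auto simp: nth_eq_iff_index_eq)

lemma preceding_nth:
  "distinct xs \<Longrightarrow> i < length xs \<Longrightarrow> preceding xs (xs ! i) = set (take i xs)"
  by (simp add: preceding_def takeWhile_neq_nth)

lemma preceding_append:
  "w \<notin> set xs \<Longrightarrow> preceding (xs @ ys) w = set xs \<union> preceding ys w"
  by (auto simp: preceding_def takeWhile_append)

lemma preceding_filter:
  "P w \<Longrightarrow> preceding (filter P xs) w = {x \<in> preceding xs w. P x}"
  by (induction xs) (auto simp: preceding_def)

lemma back_degree_eq_card_back_neighbours:
  assumes "distinct vs" "i < length vs"
  shows "back_degree E vs i = card (back_neighbours E vs (vs ! i))"
proof -
  have "bij_betw (nth vs) {j. j < i \<and> {vs ! j, vs ! i} \<in> E} (back_neighbours E vs (vs ! i))"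
    using assms
    by (auto simp: bij_betw_def inj_on_def nth_eq_iff_index_eq back_neighbours_def
        preceding_nth in_set_conv_nth)
  then show ?thesis
    unfolding back_degree_def by (rule bij_betw_same_card)
qed

lemma nth_in_set_take_iff:
  assumes "distinct xs" "i < length xs"
  shows "xs ! i \<in> set (take n xs) \<longleftrightarrow> i < n"
proof
  assume "xs ! i \<in> set (take n xs)"
  then obtain j where "j < n" "j < length xs" "xs ! j = xs ! i"
    by (auto simp: in_set_conv_nth)
  with assms show "i < n"
    by (simp add: nth_eq_iff_index_eq)
next
  assume "i < n"
  with assms(2) show "xs ! i \<in> set (take n xs)"
    by (auto simp: in_set_conv_nth intro!: exI[of _ i])
qed

lemma construction_order_nth_in_pinned_iff:
  assumes "construction_order V P vs" "i < length vs"
  shows "vs ! i \<in> P \<longleftrightarrow> i < card P"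
proof -
  have "distinct vs" and "set (take (card P) vs) = P"
    using assms(1) by (auto simp: construction_order_def)
  with assms(2) show ?thesis
    using nth_in_set_take_iff by blast
qed

lemma k_admissible_iff_back_neighbours:
  "k_admissible k V E P \<longleftrightarrow>
     (\<exists>vs. construction_order V P vs \<and> (\<forall>w \<in> V - P. card (back_neighbours E vs w) \<le> k))"
proof -
  have "(\<forall>i. card P \<le> i \<and> i < length vs \<longrightarrow> back_degree E vs i \<le> k) \<longleftrightarrow>
        (\<forall>w \<in> V - P. card (back_neighbours E vs w) \<le> k)"
    if co: "construction_order V P vs" for vs
  proof -
    have "distinct vs" and "set vs = V"
      using co by (auto simp: construction_order_def)
    then show ?thesis
      using construction_order_nth_in_pinned_iff[OF co]
      by (metis Diff_iff back_degree_eq_card_back_neighbours in_set_conv_nth not_less)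
  qed
  then show ?thesis
    unfolding k_admissible_def by blast
qed

lemma preceding_subset_pinned:
  assumes co: "construction_order V P vs" and "w \<in> P"
  shows "preceding vs w \<subseteq> P"
proof -
  have "distinct vs" and P: "set (take (card P) vs) = P"
    using co by (auto simp: construction_order_def)
  then obtain i where i: "i < length vs" "vs ! i = w"
    using \<open>w \<in> P\<close> by (metis in_set_conv_nth in_set_takeD)
  then have "i < card P"
    using construction_order_nth_in_pinned_iff[OF co] \<open>w \<in> P\<close> by blast
  then show ?thesis
    using i \<open>distinct vs\<close> P by (metis less_imp_le preceding_nth set_take_subset_set_take)
qed

lemma pinned_subset_preceding:
  assumes co: "construction_order V P vs" and "w \<in> V - P"
  shows "P \<subseteq> preceding vs w"
proof -
  have "distinct vs" "set vs = V" and P: "set (take (card P) vs) = P"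
    using co by (auto simp: construction_order_def)
  then obtain i where i: "i < length vs" "vs ! i = w"
    using \<open>w \<in> V - P\<close> by (metis DiffD1 in_set_conv_nth)
  then have "card P \<le> i"
    using construction_order_nth_in_pinned_iff[OF co i(1)] i(2) \<open>w \<in> V - P\<close> by auto
  then show ?thesis
    using i \<open>distinct vs\<close> P by (metis preceding_nth set_take_subset_set_take)
qed

definition restrict_order :: "'a set \<Rightarrow> 'a set \<Rightarrow> 'a list \<Rightarrow> 'a list" where
  "restrict_order V P vs = filter (\<lambda>x. x \<in> P) vs @ filter (\<lambda>x. x \<in> V - P) vs"

lemma construction_order_restrict_order:
  assumes "construction_order V P vs" "P' \<subseteq> V'" "V' \<subseteq> V"
  shows "construction_order V' P' (restrict_order V' P' vs)"
proof -
  have "distinct vs" "set vs = V"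
    using assms(1) by (auto simp: construction_order_def)
  then have "set (filter (\<lambda>x. x \<in> P') vs) = P'" "distinct (filter (\<lambda>x. x \<in> P') vs)"
    using assms(2,3) by auto
  then have "length (filter (\<lambda>x. x \<in> P') vs) = card P'"
    by (metis distinct_card)
  with \<open>distinct vs\<close> \<open>set vs = V\<close> show ?thesis
    using assms(2,3) by (auto simp: construction_order_def restrict_order_def)
qed

lemma preceding_restrict_order:
  assumes "w \<in> V - P"
  shows "preceding (restrict_order V P vs) w = P \<inter> set vs \<union> {x \<in> preceding vs w. x \<in> V - P}"
proof -
  have "w \<notin> set (filter (\<lambda>x. x \<in> P) vs)"
    using assms by simp
  then show ?thesis
    using assms by (auto simp: restrict_order_def preceding_append preceding_filter)
qed

theorem lemma4p2:
  fixes VG VH :: "'a set" and EG EH :: "'a set set" and PG PH :: "'a set" and k :: nat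
  assumes "pinned_graph VG EG PG"
    and "pinned_subgraph VH EH PH VG EG PG"
    and "k_admissible k VG EG PG"
  shows "k_admissible k VH EH PH"
proof -
  have sub: "VH \<subseteq> VG" "EH = {e \<in> EG. e \<subseteq> VH}" "PH \<subseteq> PG" "PH \<subseteq> VH"
    using assms(2) by (auto simp: pinned_subgraph_def)
  have nonadjacent: "\<And>u v. u \<in> PG \<Longrightarrow> v \<in> PG \<Longrightarrow> {u, v} \<notin> EG"
    using assms(1) by (auto simp: pinned_graph_def)
  obtain vs where co: "construction_order VG PG vs"
    and bound: "\<forall>w \<in> VG - PG. card (back_neighbours EG vs w) \<le> k"
    using assms(3) by (auto simp: k_admissible_iff_back_neighbours)
  define ws where "ws = restrict_order VH PH vs"
  have "card (back_neighbours EH ws w) \<le> k" if w: "w \<in> VH - PH" for w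
  proof (cases "w \<in> PG")
    case True
    then have "preceding ws w \<subseteq> PG"
      using preceding_restrict_order[OF w] preceding_subset_pinned[OF co] sub by (auto simp: ws_def)
    then have "back_neighbours EH ws w = {}"
      using True nonadjacent sub by (auto simp: back_neighbours_def)
    then show ?thesis
      by simp
  next
    case False
    then have "preceding ws w \<subseteq> preceding vs w"
      using preceding_restrict_order[OF w] pinned_subset_preceding[OF co] sub w by (fastforce simp: ws_def)
    then have "back_neighbours EH ws w \<subseteq> back_neighbours EG vs w"
      using sub by (auto simp: back_neighbours_def)
    then have "card (back_neighbours EH ws w) \<le> card (back_neighbours EG vs w)"
      by (rule card_mono[rotated]) (simp add: back_neighbours_def preceding_def)
    also have "\<dots> \<le> k"
      using bound False w sub(1) by blast
    finally show ?thesis .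
  qed
  moreover have "construction_order VH PH ws"
    unfolding ws_def using co sub(4,1) by (rule construction_order_restrict_order)
  ultimately show ?thesis
    unfolding k_admissible_iff_back_neighbours by blast
qed

end
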